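(* Suppose in addition that $P$ is twice continuously differentiable. Then, for every $\alpha\in[0,1)$, the efficient mechanism $M_e$ is dominated.
   Context: Setting. Let $\Theta=[\underline\theta,\overline\theta]$ with $0<\underline\theta<\overline\theta$. Let $c>0$ and let $P:\mathbb R_+\to\mathbb R_+$ be continuous and strictly decreasing with $P(\overline q)=0$ for some $\overline q>0$. Put $V(q)=\int_0^q P(z)\,dz$ and $\mathrm{TS}(\theta,q)=V(q)-c-\theta q$ for $q>0$, $\mathrm{TS}(\theta,0)=0$. Assume (A2): $\mathrm{TS}(\overline\theta,P^{-1}(\overline\theta))>0$. A mechanism is a triple $M=(r,q,u)$ of functions $r:\Theta\to[0,1]$, $q:\Theta\to[0,\overline q]$, $u:\Theta\to\mathbb R$ with $q(\theta)=0$ if and only if $r(\theta)=0$. It is IC if $u(\theta)\ge u(\theta')+(\theta'-\theta)q(\theta')r(\theta')$ for all $\theta,\theta'\in\Theta$, and IR if $u(\theta)\ge 0$ for all $\theta$. (Known fact: $M$ is IC iff $\theta\mapsto q(\theta)r(\theta)$ is nonincreasing and $u(\theta)=u(\overline\theta)+\int_\theta^{\overline\theta}q(z)r(z)\,dz$ for all $\theta$; an IC mechanism is IR iff $u(\overline\theta)\ge0$.) For $\alpha\in[0,1)$, the regulator's surplus at $\theta$ is $\mathrm{RS}_\alpha(\theta,M)=r(\theta)\,\mathrm{TS}(\theta,q(\theta))-(1-\alpha)u(\theta)$. An IC and IR mechanism $\tilde M$ dominates an IC and IR mechanism $M$ if $\mathrm{RS}_\alpha(\theta,\tilde M)\ge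 \mathrm{RS}_\alpha(\theta,M)$ for all $\theta\in\Theta$ with strict inequality for some $\theta$. The efficient quantity is $q_e(\theta)=P^{-1}(\theta)$. The efficient mechanism is $M_e=(r_e,q_e,u_e)$ with $r_e\equiv1$ and $u_e(\theta)=\int_\theta^{\overline\theta}q_e(z)\,dz$. *)

theory Defs
  imports "HOL-Analysis.Analysis"
begin

type_synonym mechanism = "(real \<Rightarrow> real) \<times> (real \<Rightarrow> real) \<times> (real \<Rightarrow> real)"

definition V :: "(real \<Rightarrow> real) \<Rightarrow> real \<Rightarrow> real" where
  "V P q = integral {0..q} P"

definition TS :: "(real \<Rightarrow> real) \<Rightarrow> real \<Rightarrow> real \<Rightarrow> real \<Rightarrow> real" where
  "TS P c \<theta> q = (if q = 0 then 0 else V P q - c - \<theta> * q)"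

definition is_mechanism :: "real set \<Rightarrow> real \<Rightarrow> mechanism \<Rightarrow> bool" where
  "is_mechanism \<Theta> qbar M = (case M of (r, q, u) \<Rightarrow>
     (\<forall>\<theta>\<in>\<Theta>. r \<theta> \<in> {0..1} \<and> q \<theta> \<in> {0..qbar} \<and> (q \<theta> = 0 \<longleftrightarrow> r \<theta> = 0)))"

definition IC :: "real set \<Rightarrow> mechanism \<Rightarrow> bool" where
  "IC \<Theta> M = (case M of (r, q, u) \<Rightarrow>
     (\<forall>\<theta>\<in>\<Theta>. \<forall>\<theta>'\<in>\<Theta>. u \<theta> \<ge> u \<theta>' + (\<theta>' - \<theta>) * q \<theta>' * r \<theta>'))"

definition IR :: "real set \<Rightarrow> mechanism \<Rightarrow> bool" where
  "IR \<Theta> M = (case M of (r, q, u) \<Rightarrow> (\<forall>\<theta>\<in>\<Theta>. u \<theta> \<ge> 0))"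

definition RS :: "(real \<Rightarrow> real) \<Rightarrow> real \<Rightarrow> real \<Rightarrow> real \<Rightarrow> mechanism \<Rightarrow> real" where
  "RS P c \<alpha> \<theta> M = (case M of (r, q, u) \<Rightarrow> r \<theta> * TS P c \<theta> (q \<theta>) - (1 - \<alpha>) * u \<theta>)"

definition dominates ::
  "real set \<Rightarrow> real \<Rightarrow> (real \<Rightarrow> real) \<Rightarrow> real \<Rightarrow> real \<Rightarrow> mechanism \<Rightarrow> mechanism \<Rightarrow> bool" where
  "dominates \<Theta> qbar P c \<alpha> M' M =
     (is_mechanism \<Theta> qbar M' \<and> IC \<Theta> M' \<and> IR \<Theta> M' \<and>
      is_mechanism \<Theta> qbar M \<and> IC \<Theta> M \<and> IR \<Theta> M \<and>
      (\<forall>\<theta>\<in>\<Theta>. RS P c \<alpha> \<theta> M' \<ge> RS P c \<alpha> \<theta> M) \<and>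
      (\<exists>\<theta>\<in>\<Theta>. RS P c \<alpha> \<theta> M' > RS P c \<alpha> \<theta> M))"

definition dominated ::
  "real set \<Rightarrow> real \<Rightarrow> (real \<Rightarrow> real) \<Rightarrow> real \<Rightarrow> real \<Rightarrow> mechanism \<Rightarrow> bool" where
  "dominated \<Theta> qbar P c \<alpha> M = (\<exists>M'. dominates \<Theta> qbar P c \<alpha> M' M)"

definition q_e :: "(real \<Rightarrow> real) \<Rightarrow> real \<Rightarrow> real \<Rightarrow> real" where
  "q_e P qbar \<theta> = the_inv_into {0..qbar} P \<theta>"

definition M_e :: "(real \<Rightarrow> real) \<Rightarrow> real \<Rightarrow> real \<Rightarrow> mechanism" where
  "M_e P qbar \<theta>h = ((\<lambda>_. 1), q_e P qbar, (\<lambda>\<theta>. integral {\<theta>..\<theta>h} (q_e P qbar)))"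

end

theory Submission
  imports Defs
begin

text \<open>
  Under the efficient mechanism every type \<open>\<theta> < \<theta>h\<close> earns the information rent
  \<open>integral {\<theta>..\<theta>h} q\<^sub>e\<close>.  Shading the quantity to \<open>q\<^sub>e \<theta> - k (\<theta>h - \<theta>)\<close> lowers that rent by
  \<open>k (\<theta>h - \<theta>)\<^sup>2 / 2\<close>, while, \<open>P\<close> being Lipschitz with constant \<open>B\<close> (it is \<open>C\<^sup>2\<close>), the loss of
  total surplus is at most \<open>B k\<^sup>2 (\<theta>h - \<theta>)\<^sup>2\<close>.  Choosing \<open>k = (1 - \<alpha>) / (4 B)\<close> keeps the
  shaded quantity nonincreasing (since \<open>q\<^sub>e\<close> falls at rate at least \<open>1 / B\<close>) and yields a
  net gain of at least \<open>(1 - \<alpha>) k (\<theta>h - \<theta>)\<^sup>2 / 4\<close>, strictly positive at \<open>\<theta>l\<close>.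
\<close>

text \<open>Always regulate, produce \<open>q\<close>, and pay the IC rents that leave type \<open>\<theta>h\<close> with zero.\<close>
definition quantity_mechanism :: "(real \<Rightarrow> real) \<Rightarrow> real \<Rightarrow> mechanism" where
  "quantity_mechanism q \<theta>h = ((\<lambda>_. 1), q, (\<lambda>\<theta>. integral {\<theta>..\<theta>h} q))"

lemma M_e_eq_quantity_mechanism: "M_e P qbar \<theta>h = quantity_mechanism (q_e P qbar) \<theta>h"
  by (simp add: M_e_def quantity_mechanism_def)

lemma RS_quantity_mechanism:
  "RS P c \<alpha> \<theta> (quantity_mechanism q \<theta>h) = TS P c \<theta> (q \<theta>) - (1 - \<alpha>) * integral {\<theta>..\<theta>h} q"
  by (simp add: RS_def quantity_mechanism_def)

lemma antimono_integral_tail_ineq: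
  fixes f :: "real \<Rightarrow> real"
  assumes cont: "continuous_on {a..b} f" and anti: "antimono_on {a..b} f"
    and t: "t \<in> {a..b}" and t': "t' \<in> {a..b}"
  shows "integral {t'..b} f + (t' - t) * f t' \<le> integral {t..b} f"
proof (cases "t \<le> t'")
  case True
  have int: "f integrable_on {t..b}"
    using cont t by (intro integrable_continuous_interval) (auto intro: continuous_on_subset)
  have "integral {t..t'} f + integral {t'..b} f = integral {t..b} f"
    using True t' int by (intro Henstock_Kurzweil_Integration.integral_combine) auto
  moreover have "integral {t..t'} (\<lambda>_. f t') \<le> integral {t..t'} f"
    using int True t t' anti
    by (intro integral_le) (auto intro: integrable_on_subinterval simp: monotone_on_def)
  ultimately show ?thesis using True by simp
next
  case False
  have int: "f integrable_on {t'..b}"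
    using cont t' by (intro integrable_continuous_interval) (auto intro: continuous_on_subset)
  have "integral {t'..t} f + integral {t..b} f = integral {t'..b} f"
    using False t int by (intro Henstock_Kurzweil_Integration.integral_combine) auto
  moreover have "integral {t'..t} f \<le> integral {t'..t} (\<lambda>_. f t')"
    using int False t t' anti
    by (intro integral_le) (auto intro: integrable_on_subinterval simp: monotone_on_def)
  ultimately show ?thesis using False by (simp add: algebra_simps)
qed

lemma quantity_mechanism_admissible:
  assumes cont: "continuous_on {\<theta>l..\<theta>h} q" and anti: "antimono_on {\<theta>l..\<theta>h} q"
    and range: "\<And>\<theta>. \<theta> \<in> {\<theta>l..\<theta>h} \<Longrightarrow> 0 < q \<theta> \<and> q \<theta> \<le> qbar"
  shows "is_mechanism {\<theta>l..\<theta>h} qbar (quantity_mechanism q \<theta>h)"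
    and "IC {\<theta>l..\<theta>h} (quantity_mechanism q \<theta>h)"
    and "IR {\<theta>l..\<theta>h} (quantity_mechanism q \<theta>h)"
proof -
  show "is_mechanism {\<theta>l..\<theta>h} qbar (quantity_mechanism q \<theta>h)"
    using range by (fastforce simp: is_mechanism_def quantity_mechanism_def)
  show "IC {\<theta>l..\<theta>h} (quantity_mechanism q \<theta>h)"
    using antimono_integral_tail_ineq[OF cont anti] by (simp add: IC_def quantity_mechanism_def)
  have "0 \<le> integral {\<theta>..\<theta>h} q" if "\<theta> \<in> {\<theta>l..\<theta>h}" for \<theta>
    using that range
    by (intro integral_nonneg integrable_continuous_interval continuous_on_subset[OF cont])
       (auto intro: less_imp_le)
  then show "IR {\<theta>l..\<theta>h} (quantity_mechanism q \<theta>h)"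
    by (simp add: IR_def quantity_mechanism_def)
qed

lemma lipschitz_of_continuous_derivative:
  fixes f f' :: "real \<Rightarrow> real"
  assumes "\<forall>x\<in>{a..b}. (f has_real_derivative f' x) (at x within {a..b})"
    and "continuous_on {a..b} f'"
  obtains B where "B > 0" "\<And>x y. x \<in> {a..b} \<Longrightarrow> y \<in> {a..b} \<Longrightarrow> \<bar>f x - f y\<bar> \<le> B * \<bar>x - y\<bar>"
proof -
  have "bounded (f' ` {a..b})"
    using assms(2) by (intro compact_imp_bounded compact_continuous_image) auto
  then obtain B where "B > 0" "\<forall>x\<in>{a..b}. norm (f' x) \<le> B"
    unfolding bounded_pos by auto
  with assms(1) show ?thesis
    using field_differentiable_bound[of "{a..b}" f f'] that by fastforce
qed

lemma q_e_inverse: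
  assumes "strict_antimono_on {0..qbar} P" and "t \<in> P ` {0..qbar}"
  shows "q_e P qbar t \<in> {0..qbar}" and "P (q_e P qbar t) = t"
proof -
  have "inj_on P {0..qbar}"
    using assms(1) strict_antimono_iff_antimono by blast
  then show "q_e P qbar t \<in> {0..qbar}" "P (q_e P qbar t) = t"
    using assms(2) by (auto simp: q_e_def the_inv_into_f_f)
qed

lemma q_e_P_eq:
  assumes "strict_antimono_on {0..qbar} P" and "x \<in> {0..qbar}"
  shows "q_e P qbar (P x) = x"
  using assms strict_antimono_iff_antimono[of "{0..qbar}" P]
  by (simp add: q_e_def the_inv_into_f_f)

lemma q_e_antimono:
  assumes anti: "strict_antimono_on {0..qbar} P"
    and t: "t \<in> P ` {0..qbar}" and s: "s \<in> P ` {0..qbar}" and "t \<le> s"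
  shows "q_e P qbar s \<le> q_e P qbar t"
proof (rule ccontr)
  assume "\<not> q_e P qbar s \<le> q_e P qbar t"
  then have "P (q_e P qbar s) < P (q_e P qbar t)"
    using anti q_e_inverse(1)[OF anti t] q_e_inverse(1)[OF anti s] by (auto simp: monotone_on_def)
  then show False
    using q_e_inverse(2)[OF anti t] q_e_inverse(2)[OF anti s] \<open>t \<le> s\<close> by simp
qed

lemma q_e_decrease_lower_bound:
  assumes anti: "strict_antimono_on {0..qbar} P"
    and lip: "\<And>x y. x \<in> {0..qbar} \<Longrightarrow> y \<in> {0..qbar} \<Longrightarrow> \<bar>P x - P y\<bar> \<le> B * \<bar>x - y\<bar>"
    and t: "t \<in> P ` {0..qbar}" and s: "s \<in> P ` {0..qbar}" and "t \<le> s"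
  shows "s - t \<le> B * (q_e P qbar t - q_e P qbar s)"
  using lip[OF q_e_inverse(1)[OF anti t] q_e_inverse(1)[OF anti s]]
    q_e_antimono[OF anti t s \<open>t \<le> s\<close>] q_e_inverse(2)[OF anti t] q_e_inverse(2)[OF anti s] \<open>t \<le> s\<close>
  by simp

lemma continuous_on_q_e:
  assumes "continuous_on {0..qbar} P" and "strict_antimono_on {0..qbar} P"
  shows "continuous_on (P ` {0..qbar}) (q_e P qbar)"
proof -
  have "inj_on P {0..qbar}"
    using assms(2) strict_antimono_iff_antimono by blast
  then show ?thesis
    unfolding q_e_def by (intro continuous_on_inv_into assms(1)) auto
qed

lemma TS_loss_le:
  assumes cont: "continuous_on {0..qbar} P" and anti: "strict_antimono_on {0..qbar} P"
    and lip: "\<And>x y. x \<in> {0..qbar} \<Longrightarrow> y \<in> {0..qbar} \<Longrightarrow> \<bar>P x - P y\<bar> \<le> B * \<bar>x - y\<bar>"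
    and ab: "0 < a" "a \<le> b" "b \<le> qbar"
  shows "TS P c (P b) b - TS P c (P b) a \<le> B * (b - a)\<^sup>2"
proof -
  have int: "P integrable_on {0..b}"
    using ab by (intro integrable_continuous_interval continuous_on_subset[OF cont]) auto
  have "integral {0..a} P + integral {a..b} P = integral {0..b} P"
    using ab int by (intro Henstock_Kurzweil_Integration.integral_combine) auto
  then have "TS P c (P b) b - TS P c (P b) a = integral {a..b} P - (b - a) * P b"
    using ab by (simp add: TS_def V_def algebra_simps)
  also have "integral {a..b} P \<le> integral {a..b} (\<lambda>_. P a)"
    using ab anti strict_antimono_iff_antimono[of "{0..qbar}" P]
    by (intro integral_le integrable_on_subinterval[OF int]) (auto simp: monotone_on_def)
  also have "integral {a..b} (\<lambda>_. P a) - (b - a) * P b = (b - a) * (P a - P b)"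
    using ab by (simp add: algebra_simps)
  also have "\<dots> \<le> (b - a) * (B * (b - a))"
    using lip[of a b] ab by (intro mult_left_mono) auto
  finally show ?thesis by (simp add: power2_eq_square algebra_simps)
qed

lemma integral_linear_ramp:
  fixes k h t :: real
  assumes "t \<le> h"
  shows "integral {t..h} (\<lambda>z. k * (h - z)) = k * (h - t)\<^sup>2 / 2"
proof -
  have "((\<lambda>z. k * (h - z)) has_integral (- (k * (h - h)\<^sup>2 / 2) - - (k * (h - t)\<^sup>2 / 2))) {t..h}"
    using assms
    by (intro fundamental_theorem_of_calculus)
       (auto simp: has_real_derivative_iff_has_vector_derivative[symmetric] power2_eq_square
             field_simps intro!: derivative_eq_intros)
  then have "((\<lambda>z. k * (h - z)) has_integral k * (h - t)\<^sup>2 / 2) {t..h}" by simp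
  then show ?thesis by (rule integral_unique)
qed

lemma antimono_on_shade:
  fixes q :: "real \<Rightarrow> real"
  assumes fall: "\<And>t s. t \<in> S \<Longrightarrow> s \<in> S \<Longrightarrow> t \<le> s \<Longrightarrow> s - t \<le> B * (q t - q s)"
    and "0 < B" "0 \<le> k" "B * k \<le> 1"
  shows "antimono_on S (\<lambda>\<theta>. q \<theta> - k * (h - \<theta>))"
proof (rule monotone_onI)
  fix t s assume ts: "t \<in> S" "s \<in> S" "t \<le> s"
  have "0 \<le> q t - q s"
    using fall[OF ts] ts(3) \<open>0 < B\<close> zero_le_mult_iff[of B "q t - q s"] by linarith
  have "k * (s - t) \<le> k * (B * (q t - q s))"
    using fall[OF ts] \<open>0 \<le> k\<close> by (rule mult_left_mono)
  also have "\<dots> = (B * k) * (q t - q s)" by simp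
  also have "\<dots> \<le> q t - q s"
    using mult_right_mono[OF \<open>B * k \<le> 1\<close> \<open>0 \<le> q t - q s\<close>] by simp
  finally show "q s - k * (h - s) \<le> q t - k * (h - t)" by (simp add: algebra_simps)
qed

lemma integral_shade:
  fixes q :: "real \<Rightarrow> real"
  assumes "q integrable_on {t..h}" and "t \<le> h"
  shows "integral {t..h} (\<lambda>\<theta>. q \<theta> - k * (h - \<theta>)) = integral {t..h} q - k * (h - t)\<^sup>2 / 2"
proof -
  have "(\<lambda>\<theta>. k * (h - \<theta>)) integrable_on {t..h}"
    by (intro integrable_continuous_interval continuous_intros)
  then have "integral {t..h} (\<lambda>\<theta>. q \<theta> - k * (h - \<theta>))
      = integral {t..h} q - integral {t..h} (\<lambda>\<theta>. k * (h - \<theta>))"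
    by (rule integral_diff[OF assms(1)])
  with integral_linear_ramp[OF assms(2)] show ?thesis by simp
qed

lemma RS_gain_from_shading:
  fixes P :: "real \<Rightarrow> real" and qbar k B :: real
  defines "qe \<equiv> q_e P qbar"
  assumes cont: "continuous_on {0..qbar} P" and anti: "strict_antimono_on {0..qbar} P"
    and lip: "\<And>x y. x \<in> {0..qbar} \<Longrightarrow> y \<in> {0..qbar} \<Longrightarrow> \<bar>P x - P y\<bar> \<le> B * \<bar>x - y\<bar>"
    and \<theta>: "\<theta> \<in> P ` {0..qbar}" "\<theta> \<le> \<theta>h"
    and int: "qe integrable_on {\<theta>..\<theta>h}"
    and pos: "0 < qe \<theta> - k * (\<theta>h - \<theta>)"
    and k: "0 \<le> k" "B * k = (1 - \<alpha>) / 4"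
  shows "RS P c \<alpha> \<theta> (quantity_mechanism qe \<theta>h) + (1 - \<alpha>) * k * (\<theta>h - \<theta>)\<^sup>2 / 4
    \<le> RS P c \<alpha> \<theta> (quantity_mechanism (\<lambda>\<theta>. qe \<theta> - k * (\<theta>h - \<theta>)) \<theta>h)"
proof -
  have b: "qe \<theta> \<le> qbar" "P (qe \<theta>) = \<theta>"
    using q_e_inverse[OF anti \<theta>(1)] by (auto simp: qe_def)
  have "TS P c \<theta> (qe \<theta>) - TS P c \<theta> (qe \<theta> - k * (\<theta>h - \<theta>)) \<le> B * (k * (\<theta>h - \<theta>))\<^sup>2"
    using TS_loss_le[OF cont anti lip pos, of "qe \<theta>" c] b k \<theta>(2) by simp
  also have "\<dots> = (B * k) * k * (\<theta>h - \<theta>)\<^sup>2"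
    by (simp add: power_mult_distrib power2_eq_square)
  also have "\<dots> = (1 - \<alpha>) * k * (\<theta>h - \<theta>)\<^sup>2 / 4"
    using k(2) by simp
  moreover have "(1 - \<alpha>) * integral {\<theta>..\<theta>h} (\<lambda>\<theta>. qe \<theta> - k * (\<theta>h - \<theta>))
      = (1 - \<alpha>) * integral {\<theta>..\<theta>h} qe - (1 - \<alpha>) * k * (\<theta>h - \<theta>)\<^sup>2 / 2"
    using integral_shade[OF int \<theta>(2), of k] by (simp add: right_diff_distrib)
  ultimately show ?thesis
    unfolding RS_quantity_mechanism by linarith
qed

lemma shading_dominates_M_e:
  fixes \<alpha> B :: real
  defines "k \<equiv> (1 - \<alpha>) / (4 * B)"
  assumes cont: "continuous_on {0..qbar} P" and anti: "strict_antimono_on {0..qbar} P"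
    and lip: "\<And>x y. x \<in> {0..qbar} \<Longrightarrow> y \<in> {0..qbar} \<Longrightarrow> \<bar>P x - P y\<bar> \<le> B * \<bar>x - y\<bar>"
    and "0 < B" "0 \<le> \<alpha>" "\<alpha> < 1" "\<theta>l < \<theta>h"
    and types: "{\<theta>l..\<theta>h} \<subseteq> P ` {0..qbar}"
    and top: "0 < q_e P qbar \<theta>h"
  shows "dominates {\<theta>l..\<theta>h} qbar P c \<alpha>
    (quantity_mechanism (\<lambda>\<theta>. q_e P qbar \<theta> - k * (\<theta>h - \<theta>)) \<theta>h) (M_e P qbar \<theta>h)"
proof -
  define qe where "qe = q_e P qbar"
  define qn where "qn = (\<lambda>\<theta>. qe \<theta> - k * (\<theta>h - \<theta>))"
  have k: "0 < k" "B * k = (1 - \<alpha>) / 4"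
    using assms(5-7) by (auto simp: k_def)
  have qe_cont: "continuous_on {\<theta>l..\<theta>h} qe"
    unfolding qe_def using continuous_on_q_e[OF cont anti] types by (rule continuous_on_subset)
  have qe_int: "qe integrable_on {\<theta>..\<theta>h}" if "\<theta> \<in> {\<theta>l..\<theta>h}" for \<theta>
    using that by (intro integrable_continuous_interval continuous_on_subset[OF qe_cont]) auto
  have qe_anti: "antimono_on {\<theta>l..\<theta>h} qe"
    unfolding qe_def using q_e_antimono[OF anti] types by (intro monotone_onI) blast
  have qn_anti: "antimono_on {\<theta>l..\<theta>h} qn"
    unfolding qn_def qe_def using k \<open>0 < B\<close> \<open>0 \<le> \<alpha>\<close> types
    by (intro antimono_on_shade[where B = B] q_e_decrease_lower_bound[OF anti lip]) auto
  have qn_cont: "continuous_on {\<theta>l..\<theta>h} qn"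
    unfolding qn_def by (intro continuous_intros qe_cont)
  have qn_le_qe: "qn \<theta> \<le> qe \<theta>" if "\<theta> \<in> {\<theta>l..\<theta>h}" for \<theta>
    using that k by (simp add: qn_def)
  have qn_pos: "0 < qn \<theta>" if "\<theta> \<in> {\<theta>l..\<theta>h}" for \<theta>
    using qn_anti that top \<open>\<theta>l < \<theta>h\<close> by (fastforce simp: monotone_on_def qn_def qe_def)
  have qe_le: "qe \<theta> \<le> qbar" if "\<theta> \<in> {\<theta>l..\<theta>h}" for \<theta>
    using q_e_inverse(1)[OF anti] that types by (auto simp: qe_def)
  have qn_range: "0 < qn \<theta> \<and> qn \<theta> \<le> qbar" and qe_range: "0 < qe \<theta> \<and> qe \<theta> \<le> qbar"
    if "\<theta> \<in> {\<theta>l..\<theta>h}" for \<theta>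
    using qn_pos[OF that] qn_le_qe[OF that] qe_le[OF that] by auto
  have gain: "RS P c \<alpha> \<theta> (quantity_mechanism qe \<theta>h) + (1 - \<alpha>) * k * (\<theta>h - \<theta>)\<^sup>2 / 4
      \<le> RS P c \<alpha> \<theta> (quantity_mechanism qn \<theta>h)" if "\<theta> \<in> {\<theta>l..\<theta>h}" for \<theta>
    unfolding qn_def qe_def
    using that types qn_pos[OF that] qe_int[OF that] k
    by (intro RS_gain_from_shading[OF cont anti lip]) (auto simp: qn_def qe_def)
  have "RS P c \<alpha> \<theta> (quantity_mechanism qe \<theta>h) \<le> RS P c \<alpha> \<theta> (quantity_mechanism qn \<theta>h)"
    if "\<theta> \<in> {\<theta>l..\<theta>h}" for \<theta>
  proof -
    have "0 \<le> (1 - \<alpha>) * k * (\<theta>h - \<theta>)\<^sup>2 / 4"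
      using k \<open>\<alpha> < 1\<close> by simp
    with gain[OF that] show ?thesis by linarith
  qed
  moreover have "RS P c \<alpha> \<theta>l (quantity_mechanism qe \<theta>h) < RS P c \<alpha> \<theta>l (quantity_mechanism qn \<theta>h)"
  proof -
    have "0 < (1 - \<alpha>) * k * (\<theta>h - \<theta>l)\<^sup>2 / 4"
      using k \<open>\<alpha> < 1\<close> \<open>\<theta>l < \<theta>h\<close> by simp
    with gain[of \<theta>l] \<open>\<theta>l < \<theta>h\<close> show ?thesis by simp
  qed
  ultimately have "dominates {\<theta>l..\<theta>h} qbar P c \<alpha> (quantity_mechanism qn \<theta>h) (quantity_mechanism qe \<theta>h)"
    unfolding dominates_def using \<open>\<theta>l < \<theta>h\<close>
      quantity_mechanism_admissible[OF qn_cont qn_anti qn_range]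
      quantity_mechanism_admissible[OF qe_cont qe_anti qe_range]
    by auto
  then show ?thesis
    by (simp add: M_e_eq_quantity_mechanism qn_def qe_def)
qed

theorem theorem4:
  fixes \<theta>l \<theta>h c qbar \<alpha> :: real and P P' P'' :: "real \<Rightarrow> real"
  assumes "0 < \<theta>l" "\<theta>l < \<theta>h"
    and "c > 0"
    and "qbar > 0"
    and "continuous_on {0..qbar} P"
    and "strict_antimono_on {0..qbar} P"
    and "\<forall>x\<in>{0..qbar}. P x \<ge> 0"
    and "P qbar = 0"
    and A2: "\<exists>q\<in>{0..qbar}. P q = \<theta>h \<and> TS P c \<theta>h q > 0"
    and "\<forall>x\<in>{0..qbar}. (P has_real_derivative P' x) (at x within {0..qbar})"
    and "\<forall>x\<in>{0..qbar}. (P' has_real_derivative P'' x) (at x within {0..qbar})"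
    and "continuous_on {0..qbar} P''"
    and "0 \<le> \<alpha>" "\<alpha> < 1"
  shows "dominated {\<theta>l..\<theta>h} qbar P c \<alpha> (M_e P qbar \<theta>h)"
proof -
  have "continuous_on {0..qbar} P'"
    using assms(11) by (auto simp: continuous_on_eq_continuous_within intro: DERIV_continuous)
  then obtain B where "0 < B"
    and lip: "\<And>x y. x \<in> {0..qbar} \<Longrightarrow> y \<in> {0..qbar} \<Longrightarrow> \<bar>P x - P y\<bar> \<le> B * \<bar>x - y\<bar>"
    using lipschitz_of_continuous_derivative[OF assms(10)] by blast
  obtain qs where qs: "qs \<in> {0..qbar}" "P qs = \<theta>h" "TS P c \<theta>h qs > 0"
    using A2 by blast
  have "{\<theta>l..\<theta>h} \<subseteq> P ` {0..qbar}"
  proof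
    fix \<theta> assume "\<theta> \<in> {\<theta>l..\<theta>h}"
    moreover have "continuous_on {qs..qbar} P"
      by (rule continuous_on_subset[OF assms(5)]) (use qs(1) in auto)
    ultimately obtain x where "qs \<le> x" "x \<le> qbar" "P x = \<theta>"
      using IVT2'[of P qbar \<theta> qs] assms(1,8) qs by auto
    then show "\<theta> \<in> P ` {0..qbar}"
      using qs(1) by force
  qed
  moreover have "0 < q_e P qbar \<theta>h" \<comment> \<open>(A2) rules out \<open>qs = 0\<close>, where \<open>TS\<close> vanishes\<close>
    using q_e_P_eq[OF assms(6) qs(1)] qs by (auto simp: TS_def order_le_less)
  ultimately show ?thesis
    unfolding dominated_def
    using shading_dominates_M_e[OF assms(5,6) lip \<open>0 < B\<close> assms(13,14,2)] by blast
qed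

end
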